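(* Let $W(x,y,z)\in F(x,y,z)$ be one of the words $yx^{-1}y$, $y^{-s}xy^{s}$, $yz^{-s}y^{-1}xz^{s}$, $yz^{-s}xy^{-1}z^{s}$, $z^{-s}y^{-1}xz^{s}y$, $z^{-s}xy^{-1}z^{s}y$, where $s\in\mathbb{Z}$. Then for every group $G$ and every element $c\in G$, the algebraic system $(G,*_{W,c})$ is a quandle.
   Context: A quandle is a set $Q$ with a binary operation $(x,y)\mapsto x*y$ satisfying: (q1) $x*x=x$ for all $x\in Q$; (q2) for every $x\in Q$ the map $y\mapsto y*x$ is a bijection of $Q$; (q3) $(x*y)*z=(x*z)*(y*z)$ for all $x,y,z\in Q$. For a word $W(x,y,z)$ in the free group $F(x,y,z)$, a group $G$ and a fixed element $c\in G$, the binary operation $*_{W,c}$ on $G$ is defined by $a*_{W,c}b=W(a,b,c)$ (substitute $a$ for $x$, $b$ for $y$, $c$ for $z$ and evaluate in $G$). *)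

theory Defs
  imports "HOL-Algebra.Group"
begin

definition is_quandle :: "'a set \<Rightarrow> ('a \<Rightarrow> 'a \<Rightarrow> 'a) \<Rightarrow> bool" where
  "is_quandle Q op \<longleftrightarrow>
     (\<forall>x\<in>Q. \<forall>y\<in>Q. op x y \<in> Q) \<and>
     (\<forall>x\<in>Q. op x x = x) \<and>
     (\<forall>x\<in>Q. bij_betw (\<lambda>y. op y x) Q Q) \<and>
     (\<forall>x\<in>Q. \<forall>y\<in>Q. \<forall>z\<in>Q. op (op x y) z = op (op x z) (op y z))"

datatype word = Wa | Wb | Wc | Wd | We | Wf

text \<open>Evaluation W(a,b,c) of a word in the group G (x := a, y := b, z := c).\<close>
fun word_eval :: "('g, 'm) monoid_scheme \<Rightarrow> word \<Rightarrow> int \<Rightarrow> 'g \<Rightarrow> 'g \<Rightarrow> 'g \<Rightarrow> 'g" where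
  "word_eval G Wa s a b c = b \<otimes>\<^bsub>G\<^esub> inv\<^bsub>G\<^esub> a \<otimes>\<^bsub>G\<^esub> b"
| "word_eval G Wb s a b c = b [^]\<^bsub>G\<^esub> (-s) \<otimes>\<^bsub>G\<^esub> a \<otimes>\<^bsub>G\<^esub> b [^]\<^bsub>G\<^esub> s"
| "word_eval G Wc s a b c = b \<otimes>\<^bsub>G\<^esub> c [^]\<^bsub>G\<^esub> (-s) \<otimes>\<^bsub>G\<^esub> inv\<^bsub>G\<^esub> b \<otimes>\<^bsub>G\<^esub> a \<otimes>\<^bsub>G\<^esub> c [^]\<^bsub>G\<^esub> s"
| "word_eval G Wd s a b c = b \<otimes>\<^bsub>G\<^esub> c [^]\<^bsub>G\<^esub> (-s) \<otimes>\<^bsub>G\<^esub> a \<otimes>\<^bsub>G\<^esub> inv\<^bsub>G\<^esub> b \<otimes>\<^bsub>G\<^esub> c [^]\<^bsub>G\<^esub> s"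
| "word_eval G We s a b c = c [^]\<^bsub>G\<^esub> (-s) \<otimes>\<^bsub>G\<^esub> inv\<^bsub>G\<^esub> b \<otimes>\<^bsub>G\<^esub> a \<otimes>\<^bsub>G\<^esub> c [^]\<^bsub>G\<^esub> s \<otimes>\<^bsub>G\<^esub> b"
| "word_eval G Wf s a b c = c [^]\<^bsub>G\<^esub> (-s) \<otimes>\<^bsub>G\<^esub> a \<otimes>\<^bsub>G\<^esub> inv\<^bsub>G\<^esub> b \<otimes>\<^bsub>G\<^esub> c [^]\<^bsub>G\<^esub> s \<otimes>\<^bsub>G\<^esub> b"

end

theory Submission
  imports Defs
begin

text \<open>Up to isomorphism, the six operations come from three classical quandle structures on a
  group. The word y x^-1 y is the core quandle and y^-s x y^s the conjugation quandle by s-th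
  powers, which is self-distributive because conjugation commutes with powers. For every
  automorphism \<sigma> the twisted conjugation a * b = \<sigma>(a b^-1) b is a quandle; for t = c^s and
  \<sigma> conjugation by t it is the word z^-s x y^-1 z^s y. The remaining words are transported
  from these along bijections of the group: inversion for y z^-s y^-1 x z^s, and translation
  by t for y z^-s x y^-1 z^s and z^-s y^-1 x z^s y, which become conjugation quandles with
  exponents -1 and 1.\<close>

lemma is_quandleD:
  assumes "is_quandle Q op"
  shows is_quandle_closed: "\<And>x y. x \<in> Q \<Longrightarrow> y \<in> Q \<Longrightarrow> op x y \<in> Q"
    and is_quandle_idem: "\<And>x. x \<in> Q \<Longrightarrow> op x x = x"
    and is_quandle_bij: "\<And>x. x \<in> Q \<Longrightarrow> bij_betw (\<lambda>y. op y x) Q Q"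
    and is_quandle_dist: "\<And>x y z. x \<in> Q \<Longrightarrow> y \<in> Q \<Longrightarrow> z \<in> Q \<Longrightarrow>
                            op (op x y) z = op (op x z) (op y z)"
  using assms unfolding is_quandle_def by blast+

lemma is_quandle_cong:
  assumes "is_quandle Q op" and eq: "\<And>a b. a \<in> Q \<Longrightarrow> b \<in> Q \<Longrightarrow> op' a b = op a b"
  shows "is_quandle Q op'"
  unfolding is_quandle_def
proof (intro conjI ballI)
  fix a b c
  assume Q: "a \<in> Q" "b \<in> Q" "c \<in> Q"
  show "op' a b \<in> Q" "op' a a = a"
    using Q eq is_quandleD[OF assms(1)] by simp_all
  show "op' (op' a b) c = op' (op' a c) (op' b c)"
    using Q eq is_quandle_dist[OF assms(1) Q] by (simp add: is_quandle_closed[OF assms(1)])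
  show "bij_betw (\<lambda>y. op' y a) Q Q"
    using is_quandle_bij[OF assms(1) Q(1)]
    by (rule bij_betw_cong[THEN iffD1, rotated]) (simp add: Q eq)
qed

lemma is_quandle_transport:
  assumes quandle: "is_quandle Q op"
    and closed: "\<phi> \<in> Q \<rightarrow> Q" "\<psi> \<in> Q \<rightarrow> Q"
    and inverse: "\<And>x. x \<in> Q \<Longrightarrow> \<phi> (\<psi> x) = x" "\<And>x. x \<in> Q \<Longrightarrow> \<psi> (\<phi> x) = x"
    and eq: "\<And>a b. a \<in> Q \<Longrightarrow> b \<in> Q \<Longrightarrow> op' a b = \<phi> (op (\<psi> a) (\<psi> b))"
  shows "is_quandle Q op'"
proof (rule is_quandle_cong[OF _ eq])
  show "is_quandle Q (\<lambda>a b. \<phi> (op (\<psi> a) (\<psi> b)))"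
    unfolding is_quandle_def
  proof (intro conjI ballI)
    fix a b c
    assume "a \<in> Q" "b \<in> Q" "c \<in> Q"
    then have Q: "\<psi> a \<in> Q" "\<psi> b \<in> Q" "\<psi> c \<in> Q"
      using closed by auto
    show "\<phi> (op (\<psi> a) (\<psi> b)) \<in> Q"
      using Q is_quandle_closed[OF quandle] closed by auto
    show "\<phi> (op (\<psi> a) (\<psi> a)) = a"
      using Q is_quandle_idem[OF quandle] inverse \<open>a \<in> Q\<close> by simp
    show "\<phi> (op (\<psi> (\<phi> (op (\<psi> a) (\<psi> b)))) (\<psi> c))
        = \<phi> (op (\<psi> (\<phi> (op (\<psi> a) (\<psi> c)))) (\<psi> (\<phi> (op (\<psi> b) (\<psi> c)))))"
      using Q is_quandle_dist[OF quandle Q] by (simp add: is_quandle_closed[OF quandle] inverse)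
    have bij_\<phi>: "bij_betw \<phi> Q Q"
      by (rule bij_betw_byWitness[where f' = \<psi>]) (use closed inverse in auto)
    have bij_\<psi>: "bij_betw \<psi> Q Q"
      by (rule bij_betw_byWitness[where f' = \<phi>]) (use closed inverse in auto)
    show "bij_betw (\<lambda>y. \<phi> (op (\<psi> y) (\<psi> a))) Q Q"
      using bij_betw_trans[OF bij_betw_trans[OF bij_\<psi> is_quandle_bij[OF quandle Q(1)]] bij_\<phi>]
      by (simp add: comp_def)
  qed
qed

context group
begin

lemma m_inv_cancel_left: "x \<in> carrier G \<Longrightarrow> y \<in> carrier G \<Longrightarrow> x \<otimes> (inv x \<otimes> y) = y"
  by (simp add: m_assoc[symmetric])

lemma inv_m_cancel_left: "x \<in> carrier G \<Longrightarrow> y \<in> carrier G \<Longrightarrow> inv x \<otimes> (x \<otimes> y) = y"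
  by (simp add: m_assoc[symmetric])

text \<open>Right-associates products and cancels adjacent inverse pairs: a normal form in which the
  word identities below become syntactic equalities.\<close>
lemmas group_normalize =
  m_assoc inv_mult_group m_inv_cancel_left inv_m_cancel_left int_pow_neg

lemma bij_betw_mult_both:
  "a \<in> carrier G \<Longrightarrow> b \<in> carrier G \<Longrightarrow> bij_betw (\<lambda>x. a \<otimes> x \<otimes> b) (carrier G) (carrier G)"
  by (rule bij_betw_byWitness[where f' = "\<lambda>x. inv a \<otimes> x \<otimes> inv b"]) (auto simp: group_normalize)

lemma int_pow_commute: "x \<in> carrier G \<Longrightarrow> x \<otimes> x [^] (i::int) = x [^] i \<otimes> x"
  using int_pow_mult[of x 1 i] int_pow_mult[of x i 1] by (simp add: add.commute)

lemma bij_betw_mult_right: "b \<in> carrier G \<Longrightarrow> bij_betw (\<lambda>x. x \<otimes> b) (carrier G) (carrier G)"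
  by (rule bij_betw_byWitness[where f' = "\<lambda>x. x \<otimes> inv b"]) (auto simp: group_normalize)

lemma inner_automorphism_iso:
  "t \<in> carrier G \<Longrightarrow> (\<lambda>x. inv t \<otimes> x \<otimes> t) \<in> iso G G"
  using bij_betw_mult_both[of "inv t" t] by (auto simp: iso_def hom_def group_normalize)

lemma conjugate_int_pow:
  assumes "t \<in> carrier G" "y \<in> carrier G"
  shows "(inv t \<otimes> y \<otimes> t) [^] (s::int) = inv t \<otimes> y [^] s \<otimes> t"
  using hom_int_pow[OF iso_imp_homomorphism[OF inner_automorphism_iso] assms(2) is_group is_group]
    assms(1) by simp

lemma core_quandle: "is_quandle (carrier G) (\<lambda>a b. b \<otimes> inv a \<otimes> b)"
proof -
  have "bij_betw (\<lambda>a. b \<otimes> inv a \<otimes> b) (carrier G) (carrier G)" if "b \<in> carrier G" for b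
    by (rule bij_betw_byWitness[where f' = "\<lambda>a. b \<otimes> inv a \<otimes> b"])
      (use that in \<open>auto simp: group_normalize\<close>)
  then show ?thesis
    unfolding is_quandle_def by (auto simp: group_normalize)
qed

lemma conjugation_quandle:
  "is_quandle (carrier G) (\<lambda>a b. b [^] (- s) \<otimes> a \<otimes> b [^] (s::int))"
  unfolding is_quandle_def
proof (intro conjI ballI)
  fix a b c
  assume carrier: "a \<in> carrier G" "b \<in> carrier G" "c \<in> carrier G"
  show "b [^] (- s) \<otimes> a \<otimes> b [^] s \<in> carrier G"
    using carrier by simp
  show "a [^] (- s) \<otimes> a \<otimes> a [^] s = a"
    using carrier by (simp add: group_normalize int_pow_commute)
  show "bij_betw (\<lambda>y. a [^] (- s) \<otimes> y \<otimes> a [^] s) (carrier G) (carrier G)"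
    using carrier by (simp add: bij_betw_mult_both)
  have conj_pow: "(c [^] (- s) \<otimes> b \<otimes> c [^] s) [^] i = c [^] (- s) \<otimes> b [^] i \<otimes> c [^] s"
    for i :: int
    using conjugate_int_pow[of "c [^] s" b i] carrier by (simp add: int_pow_neg)
  show "c [^] (- s) \<otimes> (b [^] (- s) \<otimes> a \<otimes> b [^] s) \<otimes> c [^] s =
        (c [^] (- s) \<otimes> b \<otimes> c [^] s) [^] (- s) \<otimes> (c [^] (- s) \<otimes> a \<otimes> c [^] s) \<otimes>
        (c [^] (- s) \<otimes> b \<otimes> c [^] s) [^] s"
    unfolding conj_pow using carrier by (simp add: group_normalize)
qed

lemma twisted_conjugation_quandle:
  assumes "\<sigma> \<in> iso G G"
  shows "is_quandle (carrier G) (\<lambda>a b. \<sigma> (a \<otimes> inv b) \<otimes> b)"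
proof -
  interpret \<sigma>: group_hom G G \<sigma>
    using assms by (simp add: group_hom_def group_hom_axioms_def iso_imp_homomorphism is_group)
  have "bij_betw (\<lambda>a. \<sigma> (a \<otimes> inv b) \<otimes> b) (carrier G) (carrier G)" if "b \<in> carrier G" for b
    using bij_betw_trans[OF bij_betw_trans[OF bij_betw_mult_right[of "inv b"]]
        bij_betw_mult_right[of b]] assms that
    by (simp add: iso_def comp_def)
  then show ?thesis
    unfolding is_quandle_def by (auto simp: group_normalize)
qed

lemma quandle_word_Wa: "is_quandle (carrier G) (\<lambda>a b. word_eval G Wa s a b c)"
  using core_quandle by simp

lemma quandle_word_Wb: "is_quandle (carrier G) (\<lambda>a b. word_eval G Wb s a b c)"
  using conjugation_quandle by simp

lemma quandle_word_Wc:
  assumes "c \<in> carrier G"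
  shows "is_quandle (carrier G) (\<lambda>a b. word_eval G Wc s a b c)"
  by (rule is_quandle_transport
        [OF twisted_conjugation_quandle[OF inner_automorphism_iso[of "c [^] s"]],
         where \<phi> = "\<lambda>x. inv x" and \<psi> = "\<lambda>x. inv x"])
    (use assms in \<open>auto simp: group_normalize\<close>)

lemma quandle_word_Wd:
  assumes "c \<in> carrier G"
  shows "is_quandle (carrier G) (\<lambda>a b. word_eval G Wd s a b c)"
  by (rule is_quandle_transport[OF conjugation_quandle[of "- 1"],
        where \<phi> = "\<lambda>x. x \<otimes> c [^] s" and \<psi> = "\<lambda>x. x \<otimes> inv (c [^] s)"])
    (use assms in \<open>auto simp: group_normalize\<close>)

lemma quandle_word_We:
  assumes "c \<in> carrier G"
  shows "is_quandle (carrier G) (\<lambda>a b. word_eval G We s a b c)"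
  by (rule is_quandle_transport[OF conjugation_quandle[of 1],
        where \<phi> = "\<lambda>x. inv (c [^] s) \<otimes> x" and \<psi> = "\<lambda>x. c [^] s \<otimes> x"])
    (use assms in \<open>auto simp: group_normalize\<close>)

lemma quandle_word_Wf:
  assumes "c \<in> carrier G"
  shows "is_quandle (carrier G) (\<lambda>a b. word_eval G Wf s a b c)"
  by (rule is_quandle_cong
        [OF twisted_conjugation_quandle[OF inner_automorphism_iso[of "c [^] s"]]])
    (use assms in \<open>simp_all add: group_normalize\<close>)

end

theorem mainTheorem2:
  fixes G :: "('g, 'm) monoid_scheme" and W :: word and s :: int and c :: 'g
  assumes "group G" and "c \<in> carrier G"
  shows "is_quandle (carrier G) (\<lambda>a b. word_eval G W s a b c)"
proof -
  interpret group G by fact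
  show ?thesis
    using assms(2) quandle_word_Wa quandle_word_Wb quandle_word_Wc quandle_word_Wd
      quandle_word_We quandle_word_Wf
    by (cases W) simp_all
qed

end
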